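(* Let $P$ be a poset whose vertex set $V$ is a finite subset of $\mathbb{Z}_{>0}$ (with order $\prec$ unrelated to the integer order). Let $D(P)$ be the digraph on $V$ with an edge $u\to v$ iff $v\prec u$, and let $G(P)$ be the incomparability graph of $P$. Then $\Xi_{D(P)}(\mathbf{x},t)=X_{G(P)}(\mathbf{x},t)$.
   Context: $X_G(\mathbf{x},t)=\sum_\kappa t^{\mathrm{asc}(\kappa)}\prod_v x_{\kappa(v)}$ over proper colorings $\kappa:V\to\mathbb{Z}_{>0}$, with $\mathrm{asc}(\kappa)$ the number of edges $\{u,v\}$, $u<v$, $\kappa(u)<\kappa(v)$. The incomparability graph joins two distinct vertices iff they are incomparable in $P$. For a digraph $D$ on $V$ with $n=|V|$: a sequencing is a bijection $q:[n]\to V$; for a composition $\beta=(\beta_1,\dots,\beta_\ell)$ of $n$ put $B_i=\beta_1+\cdots+\beta_i$, $B_0=0$. An ordered path cover is a pair $(q,\beta)$ such that $q(B_{i-1}+1)\to\cdots\to q(B_i)$ is a directed path in $D$ for every $i$. $\mathrm{asc}(q)$ is the number of pairs $\{u,v\}$ with (1) either both $u\to v$ and $v\to u$ are edges or neither is, (2) $u<v$, (3) $v$ appears later than $u$ in $q$. $\Xi_D(\mathbf{x},t)=\sum_{(q,\beta)}t^{\mathrm{asc}(q)}M_\beta$ over ordered path covers, where $M_\beta=\sum_{i_1<\cdots<i_\ell}x_{i_1}^{\beta_1}\cdots x_{i_\ell}^{\beta_\ell}$. *)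

theory Defs
  imports "HOL-Computational_Algebra.Polynomial"
begin

text \<open>Formal power series in x = (x_1, x_2, ...) with coefficients in Z[t] are represented
  by their coefficient function: a monomial x^alpha is given by its exponent function
  alpha :: nat => nat (alpha c = exponent of x_c), and the coefficient is an int poly in t.\<close>

text \<open>Colourings kappa : V -> Z_{>0} are functions nat => nat that are positive on V
  and 0 outside V.\<close>

definition proper_colorings :: "nat set \<Rightarrow> (nat \<Rightarrow> nat \<Rightarrow> bool) \<Rightarrow> (nat \<Rightarrow> nat) set" where
  "proper_colorings V adj =
     {\<kappa>. (\<forall>v\<in>V. \<kappa> v > 0) \<and> (\<forall>v. v \<notin> V \<longrightarrow> \<kappa> v = 0)
         \<and> (\<forall>u\<in>V. \<forall>v\<in>V. adj u v \<longrightarrow> \<kappa> u \<noteq> \<kappa> v)}"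

definition col_asc :: "nat set \<Rightarrow> (nat \<Rightarrow> nat \<Rightarrow> bool) \<Rightarrow> (nat \<Rightarrow> nat) \<Rightarrow> nat" where
  "col_asc V adj \<kappa> = card {(u, v). u \<in> V \<and> v \<in> V \<and> adj u v \<and> u < v \<and> \<kappa> u < \<kappa> v}"

text \<open>The monomial prod_{v in V} x_{kappa v} has exponent function c |-> #(kappa^{-1}(c)).\<close>
definition col_monomial :: "nat set \<Rightarrow> (nat \<Rightarrow> nat) \<Rightarrow> (nat \<Rightarrow> nat)" where
  "col_monomial V \<kappa> = (\<lambda>c. card {v \<in> V. \<kappa> v = c})"

definition X_coeff :: "nat set \<Rightarrow> (nat \<Rightarrow> nat \<Rightarrow> bool) \<Rightarrow> (nat \<Rightarrow> nat) \<Rightarrow> int poly" where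
  "X_coeff V adj \<alpha> =
     (\<Sum>\<kappa> \<in> {\<kappa> \<in> proper_colorings V adj. col_monomial V \<kappa> = \<alpha>}. monom 1 (col_asc V adj \<kappa>))"

text \<open>A sequencing q : [n] -> V is a list qs with distinct entries and set qs = V
  (q(m) = qs ! (m-1)); a composition beta of n is a list of positive naturals with sum n.\<close>

definition sequencings :: "nat set \<Rightarrow> nat list set" where
  "sequencings V = {qs. distinct qs \<and> set qs = V}"

definition compositions :: "nat \<Rightarrow> nat list set" where
  "compositions n = {\<beta>. sum_list \<beta> = n \<and> (\<forall>b \<in> set \<beta>. 0 < b)}"

text \<open>B_i = beta_1 + ... + beta_i (0-based: B i = sum of first i parts).\<close>
definition partial_sum :: "nat list \<Rightarrow> nat \<Rightarrow> nat" where
  "partial_sum \<beta> i = sum_list (take i \<beta>)"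

definition is_ordered_path_cover :: "(nat \<Rightarrow> nat \<Rightarrow> bool) \<Rightarrow> nat list \<Rightarrow> nat list \<Rightarrow> bool" where
  "is_ordered_path_cover E qs \<beta> =
     (\<forall>i < length \<beta>. \<forall>m. partial_sum \<beta> i \<le> m \<and> Suc m < partial_sum \<beta> (Suc i)
         \<longrightarrow> E (qs ! m) (qs ! Suc m))"

definition ordered_path_covers :: "nat set \<Rightarrow> (nat \<Rightarrow> nat \<Rightarrow> bool) \<Rightarrow> (nat list \<times> nat list) set" where
  "ordered_path_covers V E =
     {(qs, \<beta>). qs \<in> sequencings V \<and> \<beta> \<in> compositions (card V) \<and> is_ordered_path_cover E qs \<beta>}"

definition seq_asc :: "nat set \<Rightarrow> (nat \<Rightarrow> nat \<Rightarrow> bool) \<Rightarrow> nat list \<Rightarrow> nat" where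
  "seq_asc V E qs = card {(u, v). u \<in> V \<and> v \<in> V \<and> (E u v \<longleftrightarrow> E v u) \<and> u < v \<and>
       (\<exists>i j. i < j \<and> j < length qs \<and> qs ! i = u \<and> qs ! j = v)}"

text \<open>Coefficient of x^alpha in the monomial quasisymmetric function M_beta:
  number of strictly increasing i_1 < ... < i_l in Z_{>0} with
  x_{i_1}^{beta_1} ... x_{i_l}^{beta_l} = x^alpha.\<close>
definition M_coeff :: "nat list \<Rightarrow> (nat \<Rightarrow> nat) \<Rightarrow> nat" where
  "M_coeff \<beta> \<alpha> = card {is :: nat list. length is = length \<beta> \<and> sorted_wrt (<) is \<and>
       (\<forall>j \<in> set is. 0 < j) \<and>
       \<alpha> = (\<lambda>c. \<Sum>j < length \<beta>. if is ! j = c then \<beta> ! j else 0)}"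

definition Xi_coeff :: "nat set \<Rightarrow> (nat \<Rightarrow> nat \<Rightarrow> bool) \<Rightarrow> (nat \<Rightarrow> nat) \<Rightarrow> int poly" where
  "Xi_coeff V E \<alpha> =
     (\<Sum>(qs, \<beta>) \<in> ordered_path_covers V E. of_nat (M_coeff \<beta> \<alpha>) * monom 1 (seq_asc V E qs))"

text \<open>The poset P on V is given by its strict order prec (x prec y).\<close>
definition poset_digraph :: "nat set \<Rightarrow> (nat \<Rightarrow> nat \<Rightarrow> bool) \<Rightarrow> nat \<Rightarrow> nat \<Rightarrow> bool" where
  "poset_digraph V prec u v = (u \<in> V \<and> v \<in> V \<and> prec v u)"

definition incomparability_graph :: "nat set \<Rightarrow> (nat \<Rightarrow> nat \<Rightarrow> bool) \<Rightarrow> nat \<Rightarrow> nat \<Rightarrow> bool" where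
  "incomparability_graph V prec u v =
     (u \<in> V \<and> v \<in> V \<and> u \<noteq> v \<and> \<not> prec u v \<and> \<not> prec v u)"

end

theory Submission
  imports Defs
begin

text \<open>
  An ordered path cover (q, \<beta>) of D(P) together with indices i_1 < ... < i_l yields a colouring
  \<kappa> of V: the vertices of the j-th path get colour i_j. A directed path in D(P) is a descending
  chain of P, so \<kappa> is a proper colouring of G(P), and its monomial is the term
  x_{i_1}^{\<beta>_1} ... x_{i_l}^{\<beta>_l} of M_\<beta>. Moreover q lists V by increasing colour, each colour
  class from top to bottom in P; hence for incomparable u < v, v comes after u in q iff
  \<kappa> u < \<kappa> v, so the ascents of q are exactly those of \<kappa>. Conversely every proper colouring
  arises from exactly one such triple: its colour classes are chains, sorting V in the way just
  described recovers q, the class sizes recover \<beta>, and the colours used recover the indices.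
\<close>

section \<open>Blocks of a composition\<close>

lemma partial_sum_Suc: "i < length \<beta> \<Longrightarrow> partial_sum \<beta> (Suc i) = partial_sum \<beta> i + \<beta> ! i"
  by (simp add: partial_sum_def take_Suc_conv_app_nth)

lemma partial_sum_mono: "i \<le> j \<Longrightarrow> partial_sum \<beta> i \<le> partial_sum \<beta> j"
proof -
  assume "i \<le> j"
  then have "take j \<beta> = take i \<beta> @ take (j - i) (drop i \<beta>)"
    using take_add[of i "j - i" \<beta>] by simp
  then show ?thesis by (simp add: partial_sum_def)
qed

lemma partial_sum_le_sum_list: "partial_sum \<beta> i \<le> sum_list \<beta>"
  using partial_sum_mono[of i "max i (length \<beta>)" \<beta>] by (simp add: partial_sum_def)

definition block_of :: "nat list \<Rightarrow> nat \<Rightarrow> nat" where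
  "block_of \<beta> m = (LEAST i. m < partial_sum \<beta> (Suc i))"

lemma block_of_eqI:
  assumes "partial_sum \<beta> i \<le> m" "m < partial_sum \<beta> (Suc i)"
  shows "block_of \<beta> m = i"
  unfolding block_of_def
proof (rule Least_equality)
  fix k assume "m < partial_sum \<beta> (Suc k)"
  then show "i \<le> k"
    using partial_sum_mono[of "Suc k" i \<beta>] assms(1) by (cases "k < i") auto
qed (fact assms(2))

lemma block_of_bounds:
  assumes "m < sum_list \<beta>"
  shows "block_of \<beta> m < length \<beta>" "partial_sum \<beta> (block_of \<beta> m) \<le> m"
    "m < partial_sum \<beta> (Suc (block_of \<beta> m))"
proof -
  let ?P = "\<lambda>i. m < partial_sum \<beta> (Suc i)"
  have last: "?P (length \<beta> - 1)"
    using assms by (cases \<beta> rule: rev_cases) (simp_all add: partial_sum_def)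
  show "?P (block_of \<beta> m)"
    unfolding block_of_def by (rule LeastI) (fact last)
  have "block_of \<beta> m \<le> length \<beta> - 1"
    unfolding block_of_def by (rule Least_le) (fact last)
  then show "block_of \<beta> m < length \<beta>"
    using assms by (cases \<beta>) auto
  show "partial_sum \<beta> (block_of \<beta> m) \<le> m"
  proof (cases "block_of \<beta> m")
    case (Suc k)
    then have "\<not> ?P k"
      using not_less_Least[of k ?P] by (simp add: block_of_def)
    then show ?thesis using Suc by simp
  qed (simp add: partial_sum_def)
qed

lemma block_of_mono:
  assumes "m \<le> m'" "m' < sum_list \<beta>"
  shows "block_of \<beta> m \<le> block_of \<beta> m'"
  unfolding block_of_def
  by (rule Least_le) (use assms block_of_bounds(3)[OF assms(2)] in \<open>simp add: block_of_def\<close>)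

section \<open>Lists sorted by a strict order\<close>

lemma distinct_if_sorted_wrt_asymp:
  "sorted_wrt r xs \<Longrightarrow> asymp_on (set xs) r \<Longrightarrow> distinct xs"
proof (induction xs)
  case (Cons x xs)
  have "x \<notin> set xs"
    using Cons.prems unfolding asymp_on_def by auto
  moreover have "distinct xs"
    using Cons asymp_on_subset[of "set (x # xs)" r "set xs"] by auto
  ultimately show ?case by simp
qed simp

lemma sorted_wrt_unique_if_asymp:
  assumes "sorted_wrt r xs" "sorted_wrt r ys" "set xs = set ys" "asymp_on (set xs) r"
  shows "xs = ys"
  using assms
proof (induction xs arbitrary: ys)
  case (Cons x xs)
  then obtain y ys' where ys: "ys = y # ys'" by (cases ys) auto
  have "x = y"
  proof (rule ccontr)
    assume "x \<noteq> y"
    moreover have "y \<in> set xs" "x \<in> set ys'" using Cons.prems(3) ys calculation by auto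
    ultimately have "r y x" "r x y" using Cons.prems(1,2) ys by auto
    then show False using Cons.prems(4) \<open>y \<in> set xs\<close> by (auto simp: asymp_on_def)
  qed
  moreover have "distinct (x # xs)" "distinct ys"
    using distinct_if_sorted_wrt_asymp Cons.prems by (metis, metis)
  ultimately have "set xs = set ys'" using Cons.prems(3) ys by auto
  moreover have "sorted_wrt r xs" "sorted_wrt r ys'" "asymp_on (set xs) r"
    using Cons.prems ys by (auto intro: asymp_on_subset)
  ultimately have "xs = ys'" using Cons.IH by blast
  then show ?case using ys \<open>x = y\<close> by simp
qed simp

lemma card_predecessors_sorted_wrt:
  assumes "sorted_wrt r xs" "asymp_on (set xs) r" "m < length xs"
  shows "card {u \<in> set xs. r u (xs ! m)} = m"
proof -
  have "{u \<in> set xs. r u (xs ! m)} = set (take m xs)"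
  proof (intro set_eqI iffI)
    fix u assume u: "u \<in> {u \<in> set xs. r u (xs ! m)}"
    then obtain k where k: "k < length xs" "u = xs ! k" by (auto simp: in_set_conv_nth)
    have "\<not> m \<le> k"
    proof
      assume "m \<le> k"
      then have "u = xs ! m \<or> r (xs ! m) u"
        using sorted_wrt_nth_less[OF assms(1)] k by (cases "m = k") auto
      then show False using u assms(2,3) nth_mem by (auto simp: asymp_on_def)
    qed
    then show "u \<in> set (take m xs)" using k by (auto simp: in_set_conv_nth)
  next
    fix u assume "u \<in> set (take m xs)"
    then obtain k where "k < m" "u = xs ! k" by (auto simp: in_set_conv_nth)
    then show "u \<in> {u \<in> set xs. r u (xs ! m)}"
      using sorted_wrt_nth_less[OF assms(1)] assms(3) by auto
  qed
  moreover have "distinct (take m xs)"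
    using distinct_if_sorted_wrt_asymp[OF assms(1,2)] by simp
  ultimately show ?thesis using assms(3) by (simp add: distinct_card)
qed

lemma ex_sorted_wrt_list:
  assumes "finite A" "transp_on A r" "totalp_on A r"
  shows "\<exists>xs. set xs = A \<and> sorted_wrt r xs"
  using assms
proof (induction A rule: finite_induct)
  case (insert x A)
  then obtain xs where xs: "set xs = A" "sorted_wrt r xs"
    by (meson subset_insertI transp_on_subset totalp_on_subset)
  let ?ys = "filter (\<lambda>y. r y x) xs @ x # filter (r x) xs"
  have "\<forall>y\<in>A. r y x \<or> r x y"
    using insert.prems(2) insert.hyps(2) unfolding totalp_on_def by (metis insert_iff)
  then have "set ?ys = insert x A"
    using xs(1) by auto
  moreover have "sorted_wrt r ?ys"
  proof -
    have "r y z" if "y \<in> A" "z \<in> A" "r y x" "r x z" for y z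
      using insert.prems(1) that unfolding transp_on_def by blast
    then show ?thesis
      using xs unfolding sorted_wrt_append by (auto simp: sorted_wrt_filter)
  qed
  ultimately show ?case by blast
qed simp

lemma strict_sorted_nth_less_iff:
  assumes "sorted_wrt (<) (xs :: 'a :: linorder list)" "i < length xs" "j < length xs"
  shows "xs ! i < xs ! j \<longleftrightarrow> i < j"
  using assms sorted_wrt_nth_less[OF assms(1)]
  by (metis not_less_iff_gr_or_eq order.asym)

lemma set_take_strict_sorted:
  assumes "sorted_wrt (<) (xs :: 'a :: linorder list)" "j < length xs"
  shows "set (take j xs) = {x \<in> set xs. x < xs ! j}"
proof (intro set_eqI iffI)
  fix x assume "x \<in> set (take j xs)"
  then obtain k where "k < j" "x = xs ! k" using assms(2) by (auto simp: in_set_conv_nth)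
  then show "x \<in> {x \<in> set xs. x < xs ! j}"
    using assms sorted_wrt_nth_less[OF assms(1)] by auto
next
  fix x assume "x \<in> {x \<in> set xs. x < xs ! j}"
  then obtain k where "k < length xs" "x = xs ! k" "xs ! k < xs ! j" by (auto simp: in_set_conv_nth)
  then show "x \<in> set (take j xs)"
    using strict_sorted_nth_less_iff[OF assms(1)] assms(2) by (auto simp: in_set_conv_nth)
qed

lemma card_set_filter_distinct:
  "distinct xs \<Longrightarrow> card {x \<in> set xs. P x} = card {m. m < length xs \<and> P (xs ! m)}"
  using distinct_card[of "filter P xs"] length_filter_conv_card[of P xs] by simp

lemma card_fibers:
  assumes "finite V" "finite A"
  shows "card {v \<in> V. f v \<in> A} = (\<Sum>c \<in> A. card {v \<in> V. f v = c})"
proof -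
  have "{v \<in> V. f v \<in> A} = (\<Union>c \<in> A. {v \<in> V. f v = c})" by blast
  moreover have "card (\<Union>c \<in> A. {v \<in> V. f v = c}) = (\<Sum>c \<in> A. card {v \<in> V. f v = c})"
    using assms by (intro card_UN_disjoint) auto
  ultimately show ?thesis by simp
qed

definition position :: "'a list \<Rightarrow> 'a \<Rightarrow> nat" where
  "position xs x = (THE m. m < length xs \<and> xs ! m = x)"

lemma position_nth: "distinct xs \<Longrightarrow> m < length xs \<Longrightarrow> position xs (xs ! m) = m"
  unfolding position_def by (rule the_equality) (auto simp: nth_eq_iff_index_eq)

section \<open>Index lists of monomial quasisymmetric functions\<close>

definition index_monomial :: "nat list \<Rightarrow> nat list \<Rightarrow> nat \<Rightarrow> nat" where
  "index_monomial \<beta> \<iota> = (\<lambda>c. \<Sum>j < length \<beta>. if \<iota> ! j = c then \<beta> ! j else 0)"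

definition increasing_indices :: "nat \<Rightarrow> nat list set" where
  "increasing_indices l = {\<iota>. length \<iota> = l \<and> sorted_wrt (<) \<iota> \<and> (\<forall>j \<in> set \<iota>. 0 < j)}"

definition M_terms :: "nat list \<Rightarrow> (nat \<Rightarrow> nat) \<Rightarrow> nat list set" where
  "M_terms \<beta> \<alpha> = {\<iota> \<in> increasing_indices (length \<beta>). index_monomial \<beta> \<iota> = \<alpha>}"

lemma M_coeff_eq_card_M_terms: "M_coeff \<beta> \<alpha> = card (M_terms \<beta> \<alpha>)"
  unfolding M_coeff_def M_terms_def increasing_indices_def index_monomial_def
  by (intro arg_cong[where f = card] Collect_cong) auto

lemma index_monomial_nth:
  assumes "distinct \<iota>" "length \<iota> = length \<beta>" "j < length \<beta>"
  shows "index_monomial \<beta> \<iota> (\<iota> ! j) = \<beta> ! j"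
proof -
  have "index_monomial \<beta> \<iota> (\<iota> ! j) = (\<Sum>j' < length \<beta>. if j' = j then \<beta> ! j' else 0)"
    unfolding index_monomial_def using assms by (intro sum.cong) (auto simp: nth_eq_iff_index_eq)
  then show ?thesis using assms(3) by simp
qed

lemma index_monomial_notin:
  assumes "c \<notin> set \<iota>" "length \<iota> = length \<beta>"
  shows "index_monomial \<beta> \<iota> c = 0"
  unfolding index_monomial_def using assms by (intro sum.neutral) auto

lemma M_terms_iff:
  "\<iota> \<in> M_terms \<beta> \<alpha> \<longleftrightarrow> length \<iota> = length \<beta> \<and> sorted_wrt (<) \<iota> \<and> (\<forall>j \<in> set \<iota>. 0 < j)
      \<and> index_monomial \<beta> \<iota> = \<alpha>"
  by (simp add: M_terms_def increasing_indices_def)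

lemma set_M_term:
  assumes "\<iota> \<in> M_terms \<beta> \<alpha>" "\<forall>b \<in> set \<beta>. 0 < b"
  shows "set \<iota> = {c. \<alpha> c \<noteq> 0}"
proof -
  have len: "length \<iota> = length \<beta>" and \<alpha>: "index_monomial \<beta> \<iota> = \<alpha>"
    using assms(1) by (simp_all add: M_terms_iff)
  have "sorted_wrt (<) \<iota>"
    using assms(1) by (simp add: M_terms_iff)
  then have "distinct \<iota>"
    by (simp add: strict_sorted_iff)
  have "c \<in> set \<iota> \<longleftrightarrow> \<alpha> c \<noteq> 0" for c
  proof (cases "c \<in> set \<iota>")
    case True
    then obtain j where j: "j < length \<beta>" "c = \<iota> ! j"
      using len by (auto simp: in_set_conv_nth)
    then have "\<alpha> c = \<beta> ! j"
      using index_monomial_nth[OF \<open>distinct \<iota>\<close> len] \<alpha> by blast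
    then show ?thesis
      using True assms(2) nth_mem[OF j(1)] by auto
  next
    case False
    then show ?thesis using index_monomial_notin[OF False len] \<alpha> by simp
  qed
  then show ?thesis by auto
qed

lemma M_term_unique:
  assumes "\<iota> \<in> M_terms \<beta> \<alpha>" "\<forall>b \<in> set \<beta>. 0 < b"
    and "\<iota>' \<in> M_terms \<beta>' \<alpha>" "\<forall>b \<in> set \<beta>'. 0 < b"
  shows "\<iota> = \<iota>'"
proof -
  have "sorted_wrt (<) \<iota>" "sorted_wrt (<) \<iota>'"
    using assms(1,3) by (simp_all add: M_terms_iff)
  moreover have "set \<iota> = set \<iota>'"
    using set_M_term[OF assms(1,2)] set_M_term[OF assms(3,4)] by simp
  ultimately show ?thesis by (simp add: strict_sorted_equal)
qed

lemma finite_M_terms: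
  assumes "\<forall>b \<in> set \<beta>. 0 < b"
  shows "finite (M_terms \<beta> \<alpha>)"
proof (cases "M_terms \<beta> \<alpha> = {}")
  case False
  then obtain \<iota> where \<iota>: "\<iota> \<in> M_terms \<beta> \<alpha>" by blast
  have "M_terms \<beta> \<alpha> \<subseteq> {\<iota>}"
    using M_term_unique[OF _ assms \<iota> assms] by auto
  then show ?thesis by (rule finite_subset) simp
qed simp

lemma length_le_sum_list_if_pos: "\<forall>b \<in> set \<beta>. 0 < b \<Longrightarrow> length \<beta> \<le> sum_list (\<beta> :: nat list)"
  by (induction \<beta>) auto

lemma finite_compositions: "finite (compositions n)"
proof -
  have "compositions n \<subseteq> {\<beta>. set \<beta> \<subseteq> {..n} \<and> length \<beta> \<le> n}"
    by (auto simp: compositions_def length_le_sum_list_if_pos member_le_sum_list)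
  then show ?thesis using finite_lists_length_le[of "{..n}" n] finite_subset by blast
qed

lemma finite_sequencings: "finite V \<Longrightarrow> finite (sequencings V)"
proof -
  assume "finite V"
  have "sequencings V \<subseteq> {qs. set qs \<subseteq> V \<and> length qs \<le> card V}"
    by (auto simp: sequencings_def distinct_card)
  then show ?thesis using finite_lists_length_le[OF \<open>finite V\<close>] finite_subset by blast
qed

lemma finite_ordered_path_covers: "finite V \<Longrightarrow> finite (ordered_path_covers V E)"
proof -
  assume "finite V"
  have "ordered_path_covers V E \<subseteq> sequencings V \<times> compositions (card V)"
    by (auto simp: ordered_path_covers_def)
  then show ?thesis
    using finite_sequencings[OF \<open>finite V\<close>] finite_compositions finite_subset by blast
qed

section \<open>Colourings from ordered path covers\<close>

text \<open>
  The colour classes of a proper colouring of G(P) are chains of P. Listing them by increasing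
  colour and each class from top to bottom in P makes consecutive vertices of a class edges of D(P).
\<close>
definition color_order :: "(nat \<Rightarrow> nat \<Rightarrow> bool) \<Rightarrow> (nat \<Rightarrow> nat) \<Rightarrow> nat \<Rightarrow> nat \<Rightarrow> bool" where
  "color_order prec \<kappa> u v \<longleftrightarrow> \<kappa> u < \<kappa> v \<or> (\<kappa> u = \<kappa> v \<and> prec v u)"

definition path_cover_coloring :: "nat list \<Rightarrow> nat list \<Rightarrow> nat list \<Rightarrow> nat \<Rightarrow> nat" where
  "path_cover_coloring qs \<beta> \<iota> v = (if v \<in> set qs then \<iota> ! block_of \<beta> (position qs v) else 0)"

locale finite_poset =
  fixes V :: "nat set" and prec :: "nat \<Rightarrow> nat \<Rightarrow> bool"
  assumes finite_V: "finite V"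
    and irreflp_prec: "irreflp_on V prec"
    and transp_prec: "transp_on V prec"
begin

lemma asymp_prec: "asymp_on V prec"
  using asymp_on_iff_irreflp_on_if_transp_on irreflp_prec transp_prec by blast

lemma asymp_color_order: "asymp_on V (color_order prec \<kappa>)"
  using asymp_prec by (auto simp: asymp_on_def color_order_def)

lemma transp_color_order: "transp_on V (color_order prec \<kappa>)"
  using transp_prec unfolding transp_on_def color_order_def
  by (metis order.strict_trans order.strict_trans1 order.strict_trans2)

lemma edge_symmetric_iff_incomparable:
  assumes "u \<in> V" "v \<in> V"
  shows "(poset_digraph V prec u v \<longleftrightarrow> poset_digraph V prec v u) \<longleftrightarrow> \<not> prec u v \<and> \<not> prec v u"
  using assms asymp_prec by (auto simp: poset_digraph_def asymp_on_def)

end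

locale colored_path_cover = finite_poset +
  fixes qs \<beta> \<iota> :: "nat list"
  assumes cover: "(qs, \<beta>) \<in> ordered_path_covers V (poset_digraph V prec)"
    and indices: "\<iota> \<in> increasing_indices (length \<beta>)"
begin

abbreviation \<kappa> where "\<kappa> \<equiv> path_cover_coloring qs \<beta> \<iota>"

lemma distinct_qs: "distinct qs" and set_qs: "set qs = V"
  and sum_list_\<beta>: "sum_list \<beta> = length qs" and pos_\<beta>: "\<forall>b \<in> set \<beta>. 0 < b"
  and path: "is_ordered_path_cover (poset_digraph V prec) qs \<beta>"
  using cover distinct_card[of qs]
  by (auto simp: ordered_path_covers_def sequencings_def compositions_def)

lemma length_\<iota>: "length \<iota> = length \<beta>" and sorted_\<iota>: "sorted_wrt (<) \<iota>"
  and pos_\<iota>: "\<forall>c \<in> set \<iota>. 0 < c"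
  using indices by (auto simp: increasing_indices_def)

lemma block_bounds:
  assumes "m < length qs"
  shows "block_of \<beta> m < length \<beta>" "partial_sum \<beta> (block_of \<beta> m) \<le> m"
    "m < partial_sum \<beta> (Suc (block_of \<beta> m))"
  using block_of_bounds assms sum_list_\<beta> by simp_all

lemma coloring_nth: "m < length qs \<Longrightarrow> \<kappa> (qs ! m) = \<iota> ! block_of \<beta> m"
  by (simp add: path_cover_coloring_def position_nth[OF distinct_qs])

lemma prec_along_path:
  assumes "i < length \<beta>" "partial_sum \<beta> i \<le> a"
  shows "a < b \<Longrightarrow> b < partial_sum \<beta> (Suc i) \<Longrightarrow> prec (qs ! b) (qs ! a)"
proof (induction b)
  case (Suc b)
  have "Suc b < length qs"
    using Suc.prems partial_sum_le_sum_list[of \<beta> "Suc i"] sum_list_\<beta> by simp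
  then have in_V: "qs ! a \<in> V" "qs ! b \<in> V" "qs ! Suc b \<in> V"
    using Suc.prems set_qs by auto
  have "poset_digraph V prec (qs ! b) (qs ! Suc b)"
    using path assms Suc.prems unfolding is_ordered_path_cover_def by auto
  then have step: "prec (qs ! Suc b) (qs ! b)" by (simp add: poset_digraph_def)
  show ?case
  proof (cases "a = b")
    case False
    then have "prec (qs ! b) (qs ! a)" using Suc by simp
    then show ?thesis using step transp_prec in_V unfolding transp_on_def by blast
  qed (use step in simp)
qed simp

lemma prec_in_block:
  assumes "a < b" "b < length qs" "block_of \<beta> a = block_of \<beta> b"
  shows "prec (qs ! b) (qs ! a)"
  using prec_along_path[of "block_of \<beta> a" a b] block_bounds[of a] block_bounds[of b] assms
  by simp

lemma sorted_color_order: "sorted_wrt (color_order prec \<kappa>) qs"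
  unfolding sorted_wrt_iff_nth_less
proof (intro allI impI)
  fix a b assume ab: "a < b" "b < length qs"
  show "color_order prec \<kappa> (qs ! a) (qs ! b)"
  proof (cases "block_of \<beta> a = block_of \<beta> b")
    case True
    then show ?thesis
      using prec_in_block[OF ab] coloring_nth ab by (simp add: color_order_def)
  next
    case False
    then have "block_of \<beta> a < block_of \<beta> b"
      using block_of_mono[of a b \<beta>] ab sum_list_\<beta> by simp
    then show ?thesis
      using coloring_nth ab block_bounds strict_sorted_nth_less_iff[OF sorted_\<iota>] length_\<iota>
      by (simp add: color_order_def)
  qed
qed

lemma position_less_iff_color_less:
  assumes "a < length qs" "b < length qs"
    and "\<not> prec (qs ! a) (qs ! b)" "\<not> prec (qs ! b) (qs ! a)"
  shows "a < b \<longleftrightarrow> \<kappa> (qs ! a) < \<kappa> (qs ! b)"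
  using sorted_wrt_nth_less[OF sorted_color_order] assms
  by (metis color_order_def less_asym' nat_neq_iff)

lemma coloring_proper: "\<kappa> \<in> proper_colorings V (incomparability_graph V prec)"
  unfolding proper_colorings_def
proof (intro CollectI conjI ballI allI impI)
  fix v assume "v \<in> V"
  then obtain m where m: "m < length qs" "v = qs ! m" using set_qs by (metis in_set_conv_nth)
  then show "0 < \<kappa> v"
    using coloring_nth block_bounds(1) length_\<iota> pos_\<iota> by (simp add: nth_mem)
next
  fix v assume "v \<notin> V"
  then show "\<kappa> v = 0" using set_qs by (simp add: path_cover_coloring_def)
next
  fix u v assume "u \<in> V" "v \<in> V" "incomparability_graph V prec u v"
  moreover obtain a b where "a < length qs" "b < length qs" "u = qs ! a" "v = qs ! b"
    using \<open>u \<in> V\<close> \<open>v \<in> V\<close> set_qs by (metis in_set_conv_nth)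
  ultimately show "\<kappa> u \<noteq> \<kappa> v"
    using position_less_iff_color_less[of a b] position_less_iff_color_less[of b a]
    by (auto simp: incomparability_graph_def nat_neq_iff)
qed

lemma coloring_monomial: "col_monomial V \<kappa> = index_monomial \<beta> \<iota>"
proof
  fix c
  have "col_monomial V \<kappa> c = card {m. m < length qs \<and> \<iota> ! block_of \<beta> m = c}"
    unfolding col_monomial_def set_qs[symmetric] card_set_filter_distinct[OF distinct_qs]
    using coloring_nth by (metis (lifting))
  also have "\<dots> = index_monomial \<beta> \<iota> c"
  proof (cases "c \<in> set \<iota>")
    case True
    then obtain j where j: "j < length \<beta>" "c = \<iota> ! j" using length_\<iota> by (metis in_set_conv_nth)
    have "\<iota> ! block_of \<beta> m = c \<longleftrightarrow> block_of \<beta> m = j" if "m < length qs" for m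
      using j block_bounds(1)[OF that] sorted_\<iota> length_\<iota>
      by (metis strict_sorted_iff nth_eq_iff_index_eq)
    then have "{m. m < length qs \<and> \<iota> ! block_of \<beta> m = c} = {partial_sum \<beta> j..<partial_sum \<beta> (Suc j)}"
      using block_bounds block_of_eqI partial_sum_le_sum_list[of \<beta> "Suc j"] sum_list_\<beta>
      by fastforce
    then show ?thesis
      using j partial_sum_Suc[OF j(1)] sorted_\<iota> length_\<iota>
      by (simp add: index_monomial_nth strict_sorted_iff)
  next
    case False
    then have "{m. m < length qs \<and> \<iota> ! block_of \<beta> m = c} = {}"
      using block_bounds(1) length_\<iota> by (auto simp: nth_mem)
    then show ?thesis using index_monomial_notin[OF False length_\<iota>] by simp
  qed
  finally show "col_monomial V \<kappa> c = index_monomial \<beta> \<iota> c" .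
qed

lemma ascent_iff_color_ascent:
  assumes "u \<in> V" "v \<in> V" "u < v"
  shows "(poset_digraph V prec u v \<longleftrightarrow> poset_digraph V prec v u)
        \<and> (\<exists>i j. i < j \<and> j < length qs \<and> qs ! i = u \<and> qs ! j = v)
      \<longleftrightarrow> incomparability_graph V prec u v \<and> \<kappa> u < \<kappa> v"
proof -
  obtain a where a: "a < length qs" "u = qs ! a"
    using \<open>u \<in> V\<close> set_qs by (auto simp: in_set_conv_nth)
  obtain b where b: "b < length qs" "v = qs ! b"
    using \<open>v \<in> V\<close> set_qs by (auto simp: in_set_conv_nth)
  have precedes: "(\<exists>i j. i < j \<and> j < length qs \<and> qs ! i = u \<and> qs ! j = v) \<longleftrightarrow> a < b"
  proof
    assume "\<exists>i j. i < j \<and> j < length qs \<and> qs ! i = u \<and> qs ! j = v"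
    then obtain i j where "i < j" "j < length qs" "qs ! i = u" "qs ! j = v" by blast
    moreover have "i = a" "j = b"
      using a b calculation distinct_qs by (simp_all add: nth_eq_iff_index_eq)
    ultimately show "a < b" by simp
  qed (use a b in blast)
  have adjacent: "incomparability_graph V prec u v \<longleftrightarrow> \<not> prec u v \<and> \<not> prec v u"
    using assms by (auto simp: incomparability_graph_def)
  show ?thesis
  proof (cases "prec u v \<or> prec v u")
    case True
    then have "\<not> incomparability_graph V prec u v"
      "\<not> (poset_digraph V prec u v \<longleftrightarrow> poset_digraph V prec v u)"
      using adjacent edge_symmetric_iff_incomparable[OF assms(1,2)] by blast+
    then show ?thesis by simp
  next
    case False
    then have "a < b \<longleftrightarrow> \<kappa> u < \<kappa> v"
      using position_less_iff_color_less[OF a(1) b(1)] a(2) b(2) by simp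
    then show ?thesis
      using False precedes adjacent edge_symmetric_iff_incomparable[OF assms(1,2)] by simp
  qed
qed

lemma seq_asc_eq_col_asc: "seq_asc V (poset_digraph V prec) qs = col_asc V (incomparability_graph V prec) \<kappa>"
  unfolding seq_asc_def col_asc_def
proof (intro arg_cong[where f = card] set_eqI)
  fix p :: "nat \<times> nat"
  obtain u v where "p = (u, v)" by fastforce
  then show "p \<in> {(u, v). u \<in> V \<and> v \<in> V \<and> (poset_digraph V prec u v \<longleftrightarrow> poset_digraph V prec v u)
      \<and> u < v \<and> (\<exists>i j. i < j \<and> j < length qs \<and> qs ! i = u \<and> qs ! j = v)}
    \<longleftrightarrow> p \<in> {(u, v). u \<in> V \<and> v \<in> V \<and> incomparability_graph V prec u v \<and> u < v \<and> \<kappa> u < \<kappa> v}"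
    using ascent_iff_color_ascent[of u v] by auto
qed

end

section \<open>Ordered path covers from colourings\<close>

locale poset_coloring = finite_poset +
  fixes \<kappa> :: "nat \<Rightarrow> nat"
  assumes proper: "\<kappa> \<in> proper_colorings V (incomparability_graph V prec)"
begin

lemma color_pos: "v \<in> V \<Longrightarrow> 0 < \<kappa> v" and color_outside: "v \<notin> V \<Longrightarrow> \<kappa> v = 0"
  using proper by (auto simp: proper_colorings_def)

lemma same_color_comparable:
  assumes "u \<in> V" "v \<in> V" "u \<noteq> v" "\<kappa> u = \<kappa> v"
  shows "prec u v \<or> prec v u"
  using proper assms by (auto simp: proper_colorings_def incomparability_graph_def)

lemma totalp_color_order: "totalp_on V (color_order prec \<kappa>)"
  unfolding totalp_on_def color_order_def
  using same_color_comparable by (metis linorder_neqE_nat)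

definition sequencing :: "nat list" where
  "sequencing = (SOME qs. set qs = V \<and> sorted_wrt (color_order prec \<kappa>) qs)"

definition colors :: "nat list" where
  "colors = sorted_list_of_set (\<kappa> ` V)"

definition class_sizes :: "nat list" where
  "class_sizes = map (\<lambda>c. card {v \<in> V. \<kappa> v = c}) colors"

lemma set_sequencing: "set sequencing = V"
  and sorted_sequencing: "sorted_wrt (color_order prec \<kappa>) sequencing"
proof -
  have "\<exists>qs. set qs = V \<and> sorted_wrt (color_order prec \<kappa>) qs"
    using ex_sorted_wrt_list finite_V transp_color_order totalp_color_order by blast
  then have "set sequencing = V \<and> sorted_wrt (color_order prec \<kappa>) sequencing"
    unfolding sequencing_def by (rule someI_ex)
  then show "set sequencing = V" "sorted_wrt (color_order prec \<kappa>) sequencing" by simp_all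
qed

lemma distinct_sequencing: "distinct sequencing"
  using distinct_if_sorted_wrt_asymp sorted_sequencing asymp_color_order set_sequencing by metis

lemma length_sequencing: "length sequencing = card V"
  using distinct_card[OF distinct_sequencing] set_sequencing by simp

lemma position_in_sequencing:
  "m < card V \<Longrightarrow> card {u \<in> V. color_order prec \<kappa> u (sequencing ! m)} = m"
  using card_predecessors_sorted_wrt[OF sorted_sequencing] asymp_color_order
  by (simp add: set_sequencing length_sequencing)

lemma sorted_colors: "sorted_wrt (<) colors" and set_colors: "set colors = \<kappa> ` V"
  using finite_V by (simp_all add: colors_def)

lemma length_class_sizes: "length class_sizes = length colors"
  by (simp add: class_sizes_def)

lemma partial_sum_class_sizes:
  assumes "j < length colors"
  shows "partial_sum class_sizes j = card {v \<in> V. \<kappa> v < colors ! j}"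
proof -
  have "distinct (take j colors)"
    using sorted_colors by (simp add: strict_sorted_iff)
  then have "partial_sum class_sizes j = (\<Sum>c \<in> set (take j colors). card {v \<in> V. \<kappa> v = c})"
    by (simp add: partial_sum_def class_sizes_def take_map sum_list_distinct_conv_sum_set)
  also have "\<dots> = card {v \<in> V. \<kappa> v \<in> set (take j colors)}"
    using card_fibers[OF finite_V, of "set (take j colors)" \<kappa>] by simp
  also have "\<dots> = card {v \<in> V. \<kappa> v < colors ! j}"
    using set_take_strict_sorted[OF sorted_colors assms] set_colors by (metis (lifting) image_eqI mem_Collect_eq)
  finally show ?thesis .
qed

lemma colors_nth_block_of:
  assumes "m < card V"
  shows "block_of class_sizes m < length colors \<and> colors ! block_of class_sizes m = \<kappa> (sequencing ! m)"
proof -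
  let ?v = "sequencing ! m"
  have v: "?v \<in> V" using assms set_sequencing length_sequencing nth_mem by metis
  then obtain j where j: "j < length colors" "colors ! j = \<kappa> ?v"
    using set_colors by (metis imageI in_set_conv_nth)
  let ?below = "{u \<in> V. \<kappa> u < \<kappa> ?v}" and ?same = "{u \<in> V. \<kappa> u = \<kappa> ?v}"
  have "partial_sum class_sizes j = card ?below"
    using partial_sum_class_sizes j by simp
  moreover have "partial_sum class_sizes (Suc j) = card ?below + card ?same"
    using partial_sum_Suc[of j class_sizes] partial_sum_class_sizes j length_class_sizes
    by (simp add: class_sizes_def)
  moreover have "card ?below \<le> m"
  proof -
    have "?below \<subseteq> {u \<in> V. color_order prec \<kappa> u ?v}" by (auto simp: color_order_def)
    from card_mono[OF _ this] show ?thesis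
      using finite_V position_in_sequencing[OF assms] by simp
  qed
  moreover have "m < card ?below + card ?same"
  proof -
    have "{u \<in> V. color_order prec \<kappa> u ?v} \<subseteq> ?below \<union> (?same - {?v})"
      using asymp_color_order v by (auto simp: color_order_def asymp_on_def)
    from card_mono[OF _ this] have "m \<le> card ?below + card (?same - {?v})"
      using card_Un_le[of ?below "?same - {?v}"] finite_V position_in_sequencing[OF assms] by simp
    moreover have "card (?same - {?v}) < card ?same"
      using v finite_V by (intro psubset_card_mono) auto
    ultimately show ?thesis by simp
  qed
  ultimately have "block_of class_sizes m = j"
    by (intro block_of_eqI) simp_all
  then show ?thesis using j by simp
qed

lemma sum_list_class_sizes: "sum_list class_sizes = card V"
proof -
  have "sum_list class_sizes = (\<Sum>c \<in> set colors. card {v \<in> V. \<kappa> v = c})"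
    using sorted_colors by (simp add: class_sizes_def sum_list_distinct_conv_sum_set strict_sorted_iff)
  also have "\<dots> = card {v \<in> V. \<kappa> v \<in> set colors}"
    using card_fibers[OF finite_V, of "set colors" \<kappa>] by simp
  also have "{v \<in> V. \<kappa> v \<in> set colors} = V"
    using set_colors by auto
  finally show ?thesis .
qed

lemma class_sizes_pos: "\<forall>b \<in> set class_sizes. 0 < b"
  using finite_V set_colors by (auto simp: class_sizes_def card_gt_0_iff)

lemma sequencing_path_cover:
  "(sequencing, class_sizes) \<in> ordered_path_covers V (poset_digraph V prec)"
  unfolding ordered_path_covers_def
proof (intro CollectI case_prodI conjI)
  show "sequencing \<in> sequencings V"
    using distinct_sequencing set_sequencing by (simp add: sequencings_def)
  show "class_sizes \<in> compositions (card V)"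
    using sum_list_class_sizes class_sizes_pos by (simp add: compositions_def)
  show "is_ordered_path_cover (poset_digraph V prec) sequencing class_sizes"
    unfolding is_ordered_path_cover_def
  proof (intro allI impI)
    fix i m
    assume i: "i < length class_sizes"
      and m: "partial_sum class_sizes i \<le> m \<and> Suc m < partial_sum class_sizes (Suc i)"
    have "Suc m < card V"
      using m partial_sum_le_sum_list[of class_sizes "Suc i"] sum_list_class_sizes by simp
    then have in_V: "sequencing ! m \<in> V" "sequencing ! Suc m \<in> V"
      using set_sequencing length_sequencing nth_mem by (metis Suc_lessD)+
    have "block_of class_sizes m = i" "block_of class_sizes (Suc m) = i"
      using m by (auto intro: block_of_eqI)
    then have "\<kappa> (sequencing ! m) = \<kappa> (sequencing ! Suc m)"
      using colors_nth_block_of \<open>Suc m < card V\<close> by (metis Suc_lessD)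
    moreover have "color_order prec \<kappa> (sequencing ! m) (sequencing ! Suc m)"
      using sorted_wrt_nth_less[OF sorted_sequencing, of m "Suc m"] \<open>Suc m < card V\<close> length_sequencing
      by simp
    ultimately show "poset_digraph V prec (sequencing ! m) (sequencing ! Suc m)"
      using in_V by (simp add: color_order_def poset_digraph_def)
  qed
qed

lemma colors_increasing: "colors \<in> increasing_indices (length class_sizes)"
  using sorted_colors set_colors color_pos by (auto simp: increasing_indices_def length_class_sizes)

sublocale canonical: colored_path_cover V prec sequencing class_sizes colors
  using sequencing_path_cover colors_increasing by unfold_locales

lemma path_cover_coloring_canonical: "path_cover_coloring sequencing class_sizes colors = \<kappa>"
proof
  fix v
  show "path_cover_coloring sequencing class_sizes colors v = \<kappa> v"
  proof (cases "v \<in> V")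
    case True
    then obtain m where "m < card V" "v = sequencing ! m"
      using set_sequencing length_sequencing by (metis in_set_conv_nth)
    then show ?thesis
      using canonical.coloring_nth colors_nth_block_of length_sequencing by simp
  next
    case False
    then show ?thesis
      using color_outside set_sequencing by (simp add: path_cover_coloring_def)
  qed
qed

end

section \<open>The bijection\<close>

context finite_poset
begin

definition path_cover_terms :: "(nat \<Rightarrow> nat) \<Rightarrow> ((nat list \<times> nat list) \<times> nat list) set" where
  "path_cover_terms \<alpha> = (SIGMA (qs, \<beta>) : ordered_path_covers V (poset_digraph V prec). M_terms \<beta> \<alpha>)"

definition colorings_with_monomial :: "(nat \<Rightarrow> nat) \<Rightarrow> (nat \<Rightarrow> nat) set" where
  "colorings_with_monomial \<alpha> =
     {\<kappa> \<in> proper_colorings V (incomparability_graph V prec). col_monomial V \<kappa> = \<alpha>}"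

lemma path_cover_term_iff:
  "((qs, \<beta>), \<iota>) \<in> path_cover_terms \<alpha>
     \<longleftrightarrow> colored_path_cover V prec qs \<beta> \<iota> \<and> index_monomial \<beta> \<iota> = \<alpha>"
  unfolding path_cover_terms_def colored_path_cover_def colored_path_cover_axioms_def M_terms_def
  using finite_poset_axioms by auto

lemma path_cover_coloring_inj:
  assumes "((qs, \<beta>), \<iota>) \<in> path_cover_terms \<alpha>" "((qs', \<beta>'), \<iota>') \<in> path_cover_terms \<alpha>"
    and "path_cover_coloring qs \<beta> \<iota> = path_cover_coloring qs' \<beta>' \<iota>'"
  shows "qs = qs'" "\<beta> = \<beta>'" "\<iota> = \<iota>'"
proof -
  interpret c: colored_path_cover V prec qs \<beta> \<iota> using assms(1) path_cover_term_iff by blast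
  interpret c': colored_path_cover V prec qs' \<beta>' \<iota>' using assms(2) path_cover_term_iff by blast
  have terms: "\<iota> \<in> M_terms \<beta> \<alpha>" "\<iota>' \<in> M_terms \<beta>' \<alpha>"
    using assms(1,2) by (auto simp: path_cover_terms_def)
  show "\<iota> = \<iota>'"
    using M_term_unique[OF terms(1) c.pos_\<beta> terms(2) c'.pos_\<beta>] .
  show "\<beta> = \<beta>'"
  proof (rule nth_equalityI)
    show "length \<beta> = length \<beta>'" using c.length_\<iota> c'.length_\<iota> \<open>\<iota> = \<iota>'\<close> by simp
    fix j assume "j < length \<beta>"
    then show "\<beta> ! j = \<beta>' ! j"
      using index_monomial_nth c.length_\<iota> c'.length_\<iota> c.sorted_\<iota> \<open>\<iota> = \<iota>'\<close> terms
      by (metis M_terms_iff strict_sorted_iff)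
  qed
  show "qs = qs'"
    using sorted_wrt_unique_if_asymp[OF c.sorted_color_order] c'.sorted_color_order assms(3)
      c.set_qs c'.set_qs asymp_color_order by metis
qed

lemma bij_betw_path_cover_coloring:
  "bij_betw (\<lambda>((qs, \<beta>), \<iota>). path_cover_coloring qs \<beta> \<iota>) (path_cover_terms \<alpha>) (colorings_with_monomial \<alpha>)"
proof (rule bij_betw_imageI)
  show "inj_on (\<lambda>((qs, \<beta>), \<iota>). path_cover_coloring qs \<beta> \<iota>) (path_cover_terms \<alpha>)"
    using path_cover_coloring_inj by (intro inj_onI) auto
  show "(\<lambda>((qs, \<beta>), \<iota>). path_cover_coloring qs \<beta> \<iota>) ` path_cover_terms \<alpha> = colorings_with_monomial \<alpha>"
  proof (intro equalityI subsetI)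
    fix \<kappa> assume "\<kappa> \<in> (\<lambda>((qs, \<beta>), \<iota>). path_cover_coloring qs \<beta> \<iota>) ` path_cover_terms \<alpha>"
    then obtain qs \<beta> \<iota> where t: "((qs, \<beta>), \<iota>) \<in> path_cover_terms \<alpha>" "\<kappa> = path_cover_coloring qs \<beta> \<iota>"
      by auto
    then interpret c: colored_path_cover V prec qs \<beta> \<iota> using path_cover_term_iff by blast
    show "\<kappa> \<in> colorings_with_monomial \<alpha>"
      using t c.coloring_proper c.coloring_monomial path_cover_term_iff
      by (simp add: colorings_with_monomial_def)
  next
    fix \<kappa> assume \<kappa>: "\<kappa> \<in> colorings_with_monomial \<alpha>"
    then interpret c: poset_coloring V prec \<kappa>
      by unfold_locales (simp add: colorings_with_monomial_def)
    have "((c.sequencing, c.class_sizes), c.colors) \<in> path_cover_terms \<alpha>"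
      using c.canonical.colored_path_cover_axioms c.canonical.coloring_monomial
        c.path_cover_coloring_canonical \<kappa> path_cover_term_iff
      by (simp add: colorings_with_monomial_def)
    then show "\<kappa> \<in> (\<lambda>((qs, \<beta>), \<iota>). path_cover_coloring qs \<beta> \<iota>) ` path_cover_terms \<alpha>"
      using c.path_cover_coloring_canonical by force
  qed
qed

lemma Xi_coeff_eq_sum_path_cover_terms:
  "Xi_coeff V (poset_digraph V prec) \<alpha>
     = (\<Sum>((qs, \<beta>), \<iota>) \<in> path_cover_terms \<alpha>.
          monom 1 (col_asc V (incomparability_graph V prec) (path_cover_coloring qs \<beta> \<iota>)))"
proof -
  have "Xi_coeff V (poset_digraph V prec) \<alpha>
      = (\<Sum>(qs, \<beta>) \<in> ordered_path_covers V (poset_digraph V prec).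
           \<Sum>\<iota> \<in> M_terms \<beta> \<alpha>. monom 1 (seq_asc V (poset_digraph V prec) qs))"
    unfolding Xi_coeff_def M_coeff_eq_card_M_terms by (simp add: split_beta)
  also have "\<dots> = (\<Sum>((qs, \<beta>), \<iota>) \<in> path_cover_terms \<alpha>. monom 1 (seq_asc V (poset_digraph V prec) qs))"
  proof -
    have "\<forall>p \<in> ordered_path_covers V (poset_digraph V prec). finite (M_terms (snd p) \<alpha>)"
      using finite_M_terms by (auto simp: ordered_path_covers_def compositions_def)
    from sum.Sigma[OF finite_ordered_path_covers[OF finite_V] this,
        of "\<lambda>p \<iota>. monom 1 (seq_asc V (poset_digraph V prec) (fst p)) :: int poly"]
    show ?thesis
      unfolding path_cover_terms_def by (simp add: case_prod_unfold)
  qed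
  also have "\<dots> = (\<Sum>((qs, \<beta>), \<iota>) \<in> path_cover_terms \<alpha>.
          monom 1 (col_asc V (incomparability_graph V prec) (path_cover_coloring qs \<beta> \<iota>)))"
  proof (rule sum.cong[OF refl], clarify)
    fix qs \<beta> \<iota> assume "((qs, \<beta>), \<iota>) \<in> path_cover_terms \<alpha>"
    then interpret colored_path_cover V prec qs \<beta> \<iota> using path_cover_term_iff by blast
    show "monom 1 (seq_asc V (poset_digraph V prec) qs)
        = monom 1 (col_asc V (incomparability_graph V prec) (path_cover_coloring qs \<beta> \<iota>))"
      using seq_asc_eq_col_asc by simp
  qed
  finally show ?thesis .
qed

end

theorem proposition3p5:
  fixes V :: "nat set" and prec :: "nat \<Rightarrow> nat \<Rightarrow> bool"
  assumes "finite V" and "0 \<notin> V"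
    and "\<forall>x \<in> V. \<not> prec x x"
    and "\<forall>x \<in> V. \<forall>y \<in> V. \<forall>z \<in> V. prec x y \<and> prec y z \<longrightarrow> prec x z"
  shows "\<forall>\<alpha>. Xi_coeff V (poset_digraph V prec) \<alpha> = X_coeff V (incomparability_graph V prec) \<alpha>"
proof
  fix \<alpha>
  have "irreflp_on V prec" "transp_on V prec"
    using assms(3,4) unfolding irreflp_on_def transp_on_def by blast+
  with assms(1) interpret finite_poset V prec by unfold_locales
  have "Xi_coeff V (poset_digraph V prec) \<alpha>
      = (\<Sum>((qs, \<beta>), \<iota>) \<in> path_cover_terms \<alpha>.
           monom 1 (col_asc V (incomparability_graph V prec) (path_cover_coloring qs \<beta> \<iota>)))"
    by (rule Xi_coeff_eq_sum_path_cover_terms)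
  also have "\<dots> = (\<Sum>\<kappa> \<in> colorings_with_monomial \<alpha>. monom 1 (col_asc V (incomparability_graph V prec) \<kappa>))"
    using sum.reindex_bij_betw[OF bij_betw_path_cover_coloring,
        of "\<lambda>\<kappa>. monom 1 (col_asc V (incomparability_graph V prec) \<kappa>)"]
    by (simp add: split_def)
  also have "\<dots> = X_coeff V (incomparability_graph V prec) \<alpha>"
    by (simp add: X_coeff_def colorings_with_monomial_def)
  finally show "Xi_coeff V (poset_digraph V prec) \<alpha> = X_coeff V (incomparability_graph V prec) \<alpha>" .
qed

end
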